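(* Let $(X,d)$ be a bounded metric space and $\lambda\ge0$. Let $\ell,\ell_n:X\to[0,+\infty)$ ($n\in\mathbb{N}$) be lower semicontinuous with $\inf_X\ell=\inf_X\ell_n=0$, and assume $\ell$ is bounded. Let $u$ and $u_n$ be the Perron solutions of $(\mathcal{G}_\lambda)$ associated with $\ell$ and $\ell_n$, respectively. If $\ell_n\to\ell$ uniformly, then $u_n\to u$ uniformly.
   Context: Global slope: $G[u](x)=\sup_{y\neq x}\frac{(u(x)-u(y))_+}{d(x,y)}$ if $u(x)<+\infty$, $G[u](x)=+\infty$ otherwise. A solution of $(\mathcal{G}_\lambda)$ with data $\ell$ is a lower semicontinuous $u$ with $\inf_Xu=0$ and $\lambda u+G[u]=\ell$ on $X$; the Perron solution is the solution that is pointwise maximal among all solutions. *)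

theory Defs
  imports "HOL-Analysis.Analysis"
begin

definition lsc :: "('a::topological_space \<Rightarrow> 'b::linorder) \<Rightarrow> bool" where
  "lsc f \<longleftrightarrow> (\<forall>x. \<forall>t. t < f x \<longrightarrow> (\<forall>\<^sub>F y in nhds x. t < f y))"

text \<open>Global slope G[u](x) for u : X \<rightarrow> [0,+\<infinity>]; the supremum over the
  empty set (X a singleton) is 0, which is the value obtained by adjoining 0.\<close>
definition global_slope :: "('a::metric_space \<Rightarrow> ereal) \<Rightarrow> 'a \<Rightarrow> ereal" where
  "global_slope u x =
     (if u x < \<infinity>
      then Sup (insert 0 {max (u x - u y) 0 / ereal (dist x y) | y. y \<noteq> x})
      else \<infinity>)"

definition is_solution :: "real \<Rightarrow> ('a::metric_space \<Rightarrow> real) \<Rightarrow> ('a \<Rightarrow> ereal) \<Rightarrow> bool" where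
  "is_solution lam l u \<longleftrightarrow>
     (\<forall>x. 0 \<le> u x) \<and> lsc u \<and> (INF x. u x) = 0 \<and>
     (\<forall>x. ereal lam * u x + global_slope u x = ereal (l x))"

definition is_perron_solution :: "real \<Rightarrow> ('a::metric_space \<Rightarrow> real) \<Rightarrow> ('a \<Rightarrow> ereal) \<Rightarrow> bool" where
  "is_perron_solution lam l u \<longleftrightarrow>
     is_solution lam l u \<and> (\<forall>v. is_solution lam l v \<longrightarrow> (\<forall>x. v x \<le> u x))"

definition uniformly_conv_ereal :: "(nat \<Rightarrow> 'a \<Rightarrow> ereal) \<Rightarrow> ('a \<Rightarrow> ereal) \<Rightarrow> bool" where
  "uniformly_conv_ereal f g \<longleftrightarrow>
     (\<forall>e>0. \<forall>\<^sub>F n in sequentially. \<forall>x. \<bar>f n x - g x\<bar> < ereal e)"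

end

theory Submission
  imports Defs
begin

text \<open>
  A subsolution is a real-valued, nonnegative, lower semicontinuous \<open>v\<close> with
  \<open>inf v = 0\<close> and \<open>\<lambda> v + G[v] \<le> l\<close>. On a space of diameter at most \<open>D\<close> they satisfy
  \<open>v \<le> l D\<close>, and their pointwise supremum \<open>W\<close> is again a subsolution. It is even a
  solution: if \<open>G[W](x\<^sub>0) < l x\<^sub>0 - \<lambda> W x\<^sub>0\<close>, the maximum of \<open>W\<close> and a small steep cone
  at \<open>x\<^sub>0\<close> would be a larger subsolution. Hence the Perron solution dominates every
  subsolution.

  If \<open>l' \<ge> l - t\<^sup>2\<close> and \<open>v\<close> is a subsolution for \<open>l\<close>, then \<open>(1 - t) (v - t D)\<^sub>+\<close> is a
  subsolution for \<open>l'\<close> lying below \<open>v\<close> by at most \<open>t D (1 + l)\<close>. Applying this in both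
  directions to the Perron solutions \<open>u\<close>, \<open>u'\<close> for \<open>l\<close>, \<open>l'\<close> gives
  \<open>|u' - u| \<le> t D (sup l + 2)\<close> whenever \<open>|l' - l| \<le> t\<^sup>2\<close>.
\<close>

lemma lsc_metric:
  fixes f :: "'a::metric_space \<Rightarrow> 'b::linorder"
  shows "lsc f \<longleftrightarrow> (\<forall>x t. t < f x \<longrightarrow> (\<exists>r>0. \<forall>y. dist y x < r \<longrightarrow> t < f y))"
  unfolding lsc_def eventually_nhds_metric by blast

lemma lsc_continuous:
  fixes f :: "'a::t2_space \<Rightarrow> 'b::linorder_topology"
  assumes "\<And>x. isCont f x"
  shows "lsc f"
  unfolding lsc_def
proof (intro allI impI)
  fix x t assume "t < f x"
  moreover have "(f \<longlongrightarrow> f x) (nhds x)"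
    using assms[of x] unfolding isCont_def tendsto_at_iff_tendsto_nhds .
  ultimately show "\<forall>\<^sub>F y in nhds x. t < f y"
    using order_tendstoD(1) by blast
qed

lemma lsc_max:
  fixes f g :: "'a::topological_space \<Rightarrow> 'b::linorder"
  assumes "lsc f" "lsc g"
  shows "lsc (\<lambda>x. max (f x) (g x))"
  unfolding lsc_def less_max_iff_disj
proof (intro allI impI)
  fix x t assume "t < f x \<or> t < g x"
  then have "(\<forall>\<^sub>F y in nhds x. t < f y) \<or> (\<forall>\<^sub>F y in nhds x. t < g y)"
    using assms unfolding lsc_def by blast
  then show "\<forall>\<^sub>F y in nhds x. t < f y \<or> t < g y"
    by (auto elim: eventually_mono)
qed

lemma lsc_mono_comp:
  fixes v :: "'a::topological_space \<Rightarrow> real" and h :: "real \<Rightarrow> real"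
  assumes "lsc v" "mono h" "\<And>s. isCont h s"
  shows "lsc (\<lambda>x. h (v x))"
  unfolding lsc_def
proof (intro allI impI)
  fix x t assume "t < h (v x)"
  moreover have "(h \<longlongrightarrow> h (v x)) (at_left (v x))"
    using assms(3) unfolding isCont_def filterlim_at_split by blast
  ultimately have "\<forall>\<^sub>F s in at_left (v x). t < h s"
    using order_tendstoD(1) by blast
  then obtain b where "b < v x" "\<forall>s>b. s < v x \<longrightarrow> t < h s"
    using eventually_at_left[of "v x - 1" "v x"] by auto
  then obtain s where s: "s < v x" "t < h s"
    by (intro that[of "(b + v x) / 2"]) auto
  have "\<forall>\<^sub>F y in nhds x. s < v y"
    using assms(1) s(1) unfolding lsc_def by blast
  then show "\<forall>\<^sub>F y in nhds x. t < h (v y)"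
  proof (rule eventually_mono)
    fix y assume "s < v y"
    then show "t < h (v y)"
      using s(2) monoD[OF assms(2), of s "v y"] by simp
  qed
qed

lemma lsc_ereal_iff:
  fixes w :: "'a::topological_space \<Rightarrow> real"
  shows "lsc (\<lambda>x. ereal (w x)) \<longleftrightarrow> lsc w"
proof
  assume w: "lsc (\<lambda>x. ereal (w x))"
  have "\<forall>\<^sub>F y in nhds x. ereal t < ereal (w y)" if "t < w x" for x t
    using w[unfolded lsc_def, rule_format, of "ereal t" x] that by simp
  then show "lsc w"
    unfolding lsc_def by simp
next
  assume w: "lsc w"
  show "lsc (\<lambda>x. ereal (w x))"
    unfolding lsc_def
  proof (intro allI impI)
    fix x and t :: ereal assume t: "t < ereal (w x)"
    then show "\<forall>\<^sub>F y in nhds x. t < ereal (w y)"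
    proof (cases t)
      case (real r)
      with t w have "\<forall>\<^sub>F y in nhds x. r < w y" unfolding lsc_def by simp
      then show ?thesis using real by simp
    qed auto
  qed
qed

lemma INF_ereal_eq_0_iff:
  fixes w :: "'a \<Rightarrow> real"
  assumes "\<And>x. 0 \<le> w x"
  shows "(INF x. ereal (w x)) = 0 \<longleftrightarrow> (\<forall>e>0. \<exists>x. w x < e)"
proof
  assume "(INF x. ereal (w x)) = 0"
  then have "(INF x. ereal (w x)) < ereal e" if "0 < e" for e
    using that by simp
  then show "\<forall>e>0. \<exists>x. w x < e"
    by (simp add: INF_less_iff)
next
  assume small: "\<forall>e>0. \<exists>x. w x < e"
  have "(INF x. ereal (w x)) \<le> 0 + ereal e" if "0 < e" for e
  proof -
    obtain x where "w x < e"
      using small \<open>0 < e\<close> by blast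
    then show ?thesis
      by (intro INF_lower2[of x]) auto
  qed
  then have "(INF x. ereal (w x)) \<le> 0"
    by (rule ereal_le_epsilon2)
  moreover have "0 \<le> (INF x. ereal (w x))"
    using assms by (intro INF_greatest) simp
  ultimately show "(INF x. ereal (w x)) = 0"
    by simp
qed

lemma global_slope_nonneg: "0 \<le> global_slope u x"
  unfolding global_slope_def by (auto intro: Sup_upper)

lemma global_slope_le_iff:
  fixes w :: "'a::metric_space \<Rightarrow> real"
  shows "global_slope (\<lambda>z. ereal (w z)) x \<le> ereal g \<longleftrightarrow>
    0 \<le> g \<and> (\<forall>y. w x - w y \<le> g * dist x y)"
proof (cases "0 \<le> g")
  case True
  have slope_le: "max (ereal (w x - w y)) 0 / ereal (dist x y) \<le> ereal g \<longleftrightarrow>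
      w x - w y \<le> g * dist x y" if "y \<noteq> x" for y
  proof -
    have d: "0 < dist x y"
      using that by simp
    have "max (ereal (w x - w y)) 0 / ereal (dist x y) = ereal (max (w x - w y) 0 / dist x y)"
      using d by (simp add: max_def)
    also have "\<dots> \<le> ereal g \<longleftrightarrow> max (w x - w y) 0 \<le> g * dist x y"
      using d by (simp add: divide_le_eq)
    also have "\<dots> \<longleftrightarrow> w x - w y \<le> g * dist x y"
      using d True by simp
    finally show ?thesis .
  qed
  have "global_slope (\<lambda>z. ereal (w z)) x \<le> ereal g \<longleftrightarrow>
      (\<forall>y. y \<noteq> x \<longrightarrow> max (ereal (w x) - ereal (w y)) 0 / ereal (dist x y) \<le> ereal g)"
    using True unfolding global_slope_def by (auto simp: Sup_le_iff)
  also have "\<dots> \<longleftrightarrow> (\<forall>y. y \<noteq> x \<longrightarrow> w x - w y \<le> g * dist x y)"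
    by (simp add: slope_le)
  also have "\<dots> \<longleftrightarrow> (\<forall>y. w x - w y \<le> g * dist x y)"
    by (metis diff_self dist_self mult_zero_right order_refl)
  finally show ?thesis
    using True by simp
next
  case False
  then show ?thesis
    using global_slope_nonneg[of "\<lambda>z. ereal (w z)" x] by (auto dest: order_trans)
qed

text \<open>By \<open>subsolution_global_slope_le\<close>, the last conjunct says \<open>\<lambda> v + G[v] \<le> l\<close>.\<close>
definition is_subsolution :: "real \<Rightarrow> ('a::metric_space \<Rightarrow> real) \<Rightarrow> ('a \<Rightarrow> real) \<Rightarrow> bool" where
  "is_subsolution lam l v \<longleftrightarrow> (\<forall>x. 0 \<le> v x) \<and> lsc v \<and> (\<forall>e>0. \<exists>x. v x < e) \<and>
     (\<forall>x y. v x - v y \<le> (l x - lam * v x) * dist x y)"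

lemma subsolution_zero:
  assumes "\<And>x. 0 \<le> l x"
  shows "is_subsolution lam l (\<lambda>x. 0)"
  unfolding is_subsolution_def lsc_def using assms by auto

lemma subsolution_slope_bound_nonneg:
  assumes v: "is_subsolution lam l v" and l: "0 \<le> l x"
  shows "0 \<le> l x - lam * v x"
proof (rule ccontr)
  assume neg: "\<not> 0 \<le> l x - lam * v x"
  have v_min: "v x \<le> v y" for y
  proof -
    have "v x - v y \<le> (l x - lam * v x) * dist x y"
      using v unfolding is_subsolution_def by blast
    also have "\<dots> \<le> 0"
      using neg by (simp add: mult_nonpos_nonneg)
    finally show ?thesis
      by simp
  qed
  have "v x \<le> 0"
  proof (rule field_le_epsilon)
    fix e :: real assume "0 < e"
    then obtain y where "v y < e"
      using v unfolding is_subsolution_def by blast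
    then show "v x \<le> 0 + e"
      using v_min[of y] by simp
  qed
  then have "v x = 0"
    using v unfolding is_subsolution_def by (simp add: antisym)
  with neg l show False
    by simp
qed

lemma subsolution_global_slope_le:
  assumes "is_subsolution lam l v" "0 \<le> l x"
  shows "global_slope (\<lambda>z. ereal (v z)) x \<le> ereal (l x - lam * v x)"
  using assms subsolution_slope_bound_nonneg unfolding global_slope_le_iff is_subsolution_def by blast

lemma subsolution_le:
  assumes v: "is_subsolution lam l v" and "0 \<le> lam" "0 \<le> l x" "\<And>y. dist x y \<le> D"
  shows "v x \<le> l x * D"
proof (rule field_le_epsilon)
  fix e :: real assume "0 < e"
  then obtain y where y: "v y < e"
    using v unfolding is_subsolution_def by blast
  have "v x - v y \<le> (l x - lam * v x) * dist x y"
    using v unfolding is_subsolution_def by blast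
  also have "\<dots> \<le> l x * dist x y"
    using assms v unfolding is_subsolution_def by (simp add: mult_right_mono)
  also have "\<dots> \<le> l x * D"
    using assms by (simp add: mult_left_mono)
  finally show "v x \<le> l x * D + e"
    using y by simp
qed

lemma solution_finite:
  assumes "0 \<le> lam" "is_solution lam l u"
  shows "u x = ereal (real_of_ereal (u x))"
proof -
  have "u x \<noteq> \<infinity>"
  proof
    assume "u x = \<infinity>"
    then have "ereal lam * u x + global_slope u x = \<infinity>"
      using assms(1) unfolding global_slope_def by (cases "lam = 0") auto
    then show False
      using assms(2) unfolding is_solution_def by simp
  qed
  moreover have "0 \<le> u x"
    using assms(2) unfolding is_solution_def by blast
  ultimately show ?thesis
    by (cases "u x") auto
qed

lemma solution_imp_subsolution:
  assumes lam: "0 \<le> lam" and u: "is_solution lam l u"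
  shows "is_subsolution lam l (\<lambda>x. real_of_ereal (u x))"
proof -
  define w where "w x = real_of_ereal (u x)" for x
  have u_w: "u = (\<lambda>x. ereal (w x))"
    unfolding w_def using solution_finite[OF assms] by auto
  have w_nonneg: "0 \<le> w x" for x
    using u unfolding is_solution_def w_def by (simp add: real_of_ereal_pos)
  have "global_slope (\<lambda>z. ereal (w z)) x = ereal (l x - lam * w x)" for x
  proof -
    have "ereal (lam * w x) + global_slope (\<lambda>z. ereal (w z)) x = ereal (l x)"
      using u unfolding is_solution_def u_w by simp
    then show ?thesis
      using global_slope_nonneg[of "\<lambda>z. ereal (w z)" x]
      by (cases "global_slope (\<lambda>z. ereal (w z)) x") auto
  qed
  then have "w x - w y \<le> (l x - lam * w x) * dist x y" for x y
    using global_slope_le_iff[of w x] by (metis order_refl)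
  moreover have "lsc w"
    using u unfolding is_solution_def u_w lsc_ereal_iff by blast
  moreover have "\<forall>e>0. \<exists>x. w x < e"
    using u unfolding is_solution_def u_w INF_ereal_eq_0_iff[OF w_nonneg] by blast
  ultimately show ?thesis
    using w_nonneg unfolding is_subsolution_def w_def by blast
qed

lemma subsolution_max_cone:
  fixes W :: "'a::metric_space \<Rightarrow> real" and x0 :: 'a and c k :: real
  defines "\<phi> \<equiv> \<lambda>y. c - k * dist x0 y"
  assumes W: "is_subsolution lam l W" and k: "0 \<le> k"
    and cone_slope: "\<And>y. W y < \<phi> y \<Longrightarrow> k \<le> l y - lam * \<phi> y"
    and cone_below: "\<And>e. 0 < e \<Longrightarrow> \<exists>y. \<phi> y \<le> W y \<and> W y < e"
  shows "is_subsolution lam l (\<lambda>y. max (W y) (\<phi> y))"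
  unfolding is_subsolution_def
proof (intro conjI allI impI)
  fix x show "0 \<le> max (W x) (\<phi> x)"
    using W unfolding is_subsolution_def by (simp add: le_max_iff_disj)
next
  have "lsc \<phi>"
    unfolding \<phi>_def by (intro lsc_continuous continuous_intros)
  then show "lsc (\<lambda>y. max (W y) (\<phi> y))"
    using W unfolding is_subsolution_def by (intro lsc_max) auto
next
  fix e :: real assume "0 < e"
  then show "\<exists>x. max (W x) (\<phi> x) < e"
    using cone_below by (metis max.absorb1)
next
  fix x y
  show "max (W x) (\<phi> x) - max (W y) (\<phi> y) \<le> (l x - lam * max (W x) (\<phi> x)) * dist x y"
  proof (cases "\<phi> x \<le> W x")
    case True
    have "max (W x) (\<phi> x) - max (W y) (\<phi> y) \<le> W x - W y"
      using True by simp
    also have "\<dots> \<le> (l x - lam * W x) * dist x y"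
      using W unfolding is_subsolution_def by blast
    finally show ?thesis
      using True by simp
  next
    case False
    have "max (W x) (\<phi> x) - max (W y) (\<phi> y) \<le> \<phi> x - \<phi> y"
      using False by simp
    also have "\<dots> \<le> k * dist x y"
      using mult_left_mono[OF dist_triangle[of x0 y x] k] unfolding \<phi>_def by (simp add: algebra_simps)
    also have "\<dots> \<le> (l x - lam * \<phi> x) * dist x y"
      using cone_slope[of x] False by (simp add: mult_right_mono)
    finally show ?thesis
      using False by simp
  qed
qed

definition sup_subsolution :: "real \<Rightarrow> ('a::metric_space \<Rightarrow> real) \<Rightarrow> 'a \<Rightarrow> real" where
  "sup_subsolution lam l x = (SUP v\<in>{v. is_subsolution lam l v}. v x)"

locale bounded_slope_problem =
  fixes lam :: real and l :: "'a::metric_space \<Rightarrow> real" and D :: real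
  assumes lam_nonneg: "0 \<le> lam" and l_nonneg: "\<And>x. 0 \<le> l x" and l_lsc: "lsc l"
    and l_small: "\<And>e. 0 < e \<Longrightarrow> \<exists>x. l x < e"
    and D_pos: "0 < D" and dist_le_D: "\<And>x y :: 'a. dist x y \<le> D"
begin

lemma zero_is_subsolution: "is_subsolution lam l (\<lambda>x. 0)"
  using l_nonneg by (rule subsolution_zero)

lemma subsolution_le_D:
  assumes "is_subsolution lam l v"
  shows "v x \<le> l x * D"
  using assms lam_nonneg l_nonneg dist_le_D by (rule subsolution_le)

lemma bdd_above_subsolutions: "bdd_above ((\<lambda>v. v x) ` {v. is_subsolution lam l v})"
  using subsolution_le_D by (auto intro!: bdd_aboveI[where M = "l x * D"])

lemma subsolution_le_sup_subsolution:
  "is_subsolution lam l v \<Longrightarrow> v x \<le> sup_subsolution lam l x"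
  unfolding sup_subsolution_def by (rule cSUP_upper[OF _ bdd_above_subsolutions]) simp

lemma sup_subsolution_least:
  "(\<And>v. is_subsolution lam l v \<Longrightarrow> v x \<le> c) \<Longrightarrow> sup_subsolution lam l x \<le> c"
  unfolding sup_subsolution_def using zero_is_subsolution by (intro cSUP_least) auto

lemma less_sup_subsolution_iff:
  "t < sup_subsolution lam l x \<longleftrightarrow> (\<exists>v. is_subsolution lam l v \<and> t < v x)"
  unfolding sup_subsolution_def using zero_is_subsolution
  by (subst less_cSUP_iff[OF _ bdd_above_subsolutions]) auto

lemma sup_subsolution_is_subsolution: "is_subsolution lam l (sup_subsolution lam l)"
  unfolding is_subsolution_def
proof (intro conjI allI impI)
  fix x show "0 \<le> sup_subsolution lam l x"
    using subsolution_le_sup_subsolution[OF zero_is_subsolution] by simp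
next
  show "lsc (sup_subsolution lam l)"
    unfolding lsc_def
  proof (intro allI impI)
    fix x t assume "t < sup_subsolution lam l x"
    then obtain v where v: "is_subsolution lam l v" "t < v x"
      by (auto simp: less_sup_subsolution_iff)
    then have "\<forall>\<^sub>F y in nhds x. t < v y"
      unfolding is_subsolution_def lsc_def by blast
    then show "\<forall>\<^sub>F y in nhds x. t < sup_subsolution lam l y"
      by (rule eventually_mono) (meson v(1) subsolution_le_sup_subsolution less_le_trans)
  qed
next
  fix e :: real assume "0 < e"
  then obtain x where "l x < e / D"
    using l_small D_pos by (meson divide_pos_pos)
  then have "l x * D < e"
    using D_pos by (simp add: pos_less_divide_eq)
  moreover have "sup_subsolution lam l x \<le> l x * D"
    by (rule sup_subsolution_least, rule subsolution_le_D)
  ultimately show "\<exists>x. sup_subsolution lam l x < e"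
    by (meson le_less_trans)
next
  fix x y
  txt \<open>The subsolution inequality, rewritten as
    \<open>v x * (1 + \<lambda> d(x,y)) \<le> v y + l x * d(x,y)\<close>, is monotone in \<open>v y\<close>
    and therefore passes to the supremum.\<close>
  have "sup_subsolution lam l x \<le>
      (sup_subsolution lam l y + l x * dist x y) / (1 + lam * dist x y)"
  proof (rule sup_subsolution_least)
    fix v assume v: "is_subsolution lam l v"
    have "v x * (1 + lam * dist x y) \<le> v y + l x * dist x y"
      using v unfolding is_subsolution_def by (simp add: algebra_simps)
    also have "\<dots> \<le> sup_subsolution lam l y + l x * dist x y"
      using subsolution_le_sup_subsolution[OF v] by simp
    finally show "v x \<le> (sup_subsolution lam l y + l x * dist x y) / (1 + lam * dist x y)"
      using lam_nonneg by (simp add: pos_le_divide_eq add_pos_nonneg)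
  qed
  then show "sup_subsolution lam l x - sup_subsolution lam l y \<le>
      (l x - lam * sup_subsolution lam l x) * dist x y"
    using lam_nonneg by (simp add: pos_le_divide_eq add_pos_nonneg algebra_simps)
qed

text \<open>The cone is steeper than \<open>g\<close>, so it exceeds \<open>W\<close> only where \<open>\<eta> d(x\<^sub>0,y) < 2 \<delta>\<close>;
  there \<open>l\<close> is close to \<open>l x\<^sub>0\<close>, which keeps the cone below the slope bound.\<close>
lemma sup_subsolution_cone_is_subsolution:
  defines "W \<equiv> sup_subsolution lam l"
  assumes g: "0 \<le> g" "\<And>y. W x0 - W y \<le> g * dist x0 y"
    and \<eta>: "0 < \<eta>" "g + \<eta> \<le> l x0 - lam * W x0"
    and \<delta>: "0 < \<delta>" "lam * \<delta> \<le> \<eta> / 4"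
    and near: "\<And>y. \<eta> * dist x0 y < 2 * \<delta> \<Longrightarrow> l x0 - \<eta> / 4 < l y"
  shows "is_subsolution lam l (\<lambda>y. max (W y) (W x0 + \<delta> - (g + \<eta> / 2) * dist x0 y))"
proof (rule subsolution_max_cone)
  show "is_subsolution lam l W"
    unfolding W_def by (rule sup_subsolution_is_subsolution)
  show "0 \<le> g + \<eta> / 2"
    using g \<eta> by simp
next
  fix y assume "W y < W x0 + \<delta> - (g + \<eta> / 2) * dist x0 y"
  then have "\<eta> * dist x0 y < 2 * \<delta>"
    using g(2)[of y] by (simp add: algebra_simps)
  then have "l x0 - \<eta> / 4 < l y"
    by (rule near)
  moreover have "lam * (W x0 + \<delta> - (g + \<eta> / 2) * dist x0 y) \<le> lam * W x0 + \<eta> / 4"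
  proof -
    have "lam * (W x0 + \<delta> - (g + \<eta> / 2) * dist x0 y) \<le> lam * (W x0 + \<delta>)"
      using lam_nonneg g \<eta> by (simp add: mult_left_mono)
    then show ?thesis
      using \<delta>(2) by (simp add: algebra_simps)
  qed
  ultimately show "g + \<eta> / 2 \<le> l y - lam * (W x0 + \<delta> - (g + \<eta> / 2) * dist x0 y)"
    using \<eta>(2) by linarith
next
  fix e :: real assume "0 < e"
  have "0 \<le> lam * W x0"
    using lam_nonneg sup_subsolution_is_subsolution unfolding W_def is_subsolution_def by simp
  with \<eta> g(1) \<open>0 < e\<close> D_pos have "0 < min (e / D) (l x0 - \<eta> / 4)"
    by simp
  then obtain y where y: "l y < e / D" "l y < l x0 - \<eta> / 4"
    using l_small by fastforce
  then have "\<not> \<eta> * dist x0 y < 2 * \<delta>"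
    using near by force
  then have "W x0 + \<delta> - (g + \<eta> / 2) * dist x0 y \<le> W y"
    using g(2)[of y] by (simp add: algebra_simps)
  moreover have "W y < e"
    using subsolution_le_D[OF sup_subsolution_is_subsolution, of y] y(1) D_pos
    unfolding W_def by (simp add: pos_less_divide_eq)
  ultimately show "\<exists>y. W x0 + \<delta> - (g + \<eta> / 2) * dist x0 y \<le> W y \<and> W y < e"
    by blast
qed

lemma sup_subsolution_slope_ge:
  defines "W \<equiv> sup_subsolution lam l"
  assumes g: "0 \<le> g" "\<And>y. W x0 - W y \<le> g * dist x0 y"
  shows "l x0 - lam * W x0 \<le> g"
proof (rule ccontr)
  define \<eta> where "\<eta> = l x0 - lam * W x0 - g"
  assume "\<not> ?thesis"
  then have \<eta>: "0 < \<eta>"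
    by (simp add: \<eta>_def)
  obtain \<rho> where \<rho>: "0 < \<rho>" "\<And>y. dist y x0 < \<rho> \<Longrightarrow> l x0 - \<eta> / 4 < l y"
    using l_lsc[unfolded lsc_metric, rule_format, of "l x0 - \<eta> / 4" x0] \<eta> by auto
  define \<delta> where "\<delta> = min (\<rho> * \<eta> / 2) (\<eta> / (4 * lam + 4))"
  have \<delta>: "0 < \<delta>"
    unfolding \<delta>_def using \<rho> \<eta> lam_nonneg by simp
  have "\<delta> * (4 * lam + 4) \<le> \<eta>"
    using lam_nonneg unfolding \<delta>_def by (simp add: pos_le_divide_eq[symmetric])
  then have lam_\<delta>: "lam * \<delta> \<le> \<eta> / 4"
    using \<delta> by (simp add: algebra_simps)
  have near: "l x0 - \<eta> / 4 < l y" if "\<eta> * dist x0 y < 2 * \<delta>" for y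
  proof (rule \<rho>(2))
    have "\<eta> * dist x0 y < \<eta> * \<rho>"
      using that unfolding \<delta>_def by (simp add: algebra_simps)
    then show "dist y x0 < \<rho>"
      using \<eta> by (simp add: dist_commute)
  qed
  have "is_subsolution lam l (\<lambda>y. max (W y) (W x0 + \<delta> - (g + \<eta> / 2) * dist x0 y))"
    using g \<eta> \<delta> lam_\<delta> near unfolding W_def \<eta>_def
    by (intro sup_subsolution_cone_is_subsolution) auto
  then have "max (W x0) (W x0 + \<delta>) \<le> W x0"
    using subsolution_le_sup_subsolution[of _ x0] unfolding W_def by fastforce
  with \<delta> show False
    by simp
qed

lemma sup_subsolution_is_solution: "is_solution lam l (\<lambda>x. ereal (sup_subsolution lam l x))"
proof -
  define W where "W = sup_subsolution lam l"
  have W: "is_subsolution lam l W"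
    unfolding W_def by (rule sup_subsolution_is_subsolution)
  have W_nonneg: "0 \<le> W x" for x
    using W unfolding is_subsolution_def by blast
  have slope: "global_slope (\<lambda>z. ereal (W z)) x = ereal (l x - lam * W x)" for x
  proof (rule antisym)
    show upper: "global_slope (\<lambda>z. ereal (W z)) x \<le> ereal (l x - lam * W x)"
      using W l_nonneg by (rule subsolution_global_slope_le)
    obtain g where g: "global_slope (\<lambda>z. ereal (W z)) x = ereal g"
      using upper global_slope_nonneg[of "\<lambda>z. ereal (W z)" x]
      by (cases "global_slope (\<lambda>z. ereal (W z)) x") auto
    then have "0 \<le> g" "\<And>y. W x - W y \<le> g * dist x y"
      using global_slope_le_iff[of W x g] by auto
    then have "l x - lam * W x \<le> g"
      unfolding W_def by (rule sup_subsolution_slope_ge)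
    then show "ereal (l x - lam * W x) \<le> global_slope (\<lambda>z. ereal (W z)) x"
      using g by simp
  qed
  have "is_solution lam l (\<lambda>x. ereal (W x))"
    unfolding is_solution_def
  proof (intro conjI allI)
    show "0 \<le> ereal (W x)" for x
      using W_nonneg by simp
    show "lsc (\<lambda>x. ereal (W x))"
      using W unfolding lsc_ereal_iff is_subsolution_def by blast
    show "(INF x. ereal (W x)) = 0"
      using W unfolding INF_ereal_eq_0_iff[OF W_nonneg] is_subsolution_def by blast
    show "ereal lam * ereal (W x) + global_slope (\<lambda>z. ereal (W z)) x = ereal (l x)" for x
      unfolding slope by simp
  qed
  then show ?thesis
    unfolding W_def .
qed

lemma perron_solution_ge_subsolution:
  assumes "is_perron_solution lam l u" "is_subsolution lam l v"
  shows "ereal (v x) \<le> u x"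
proof -
  have "ereal (sup_subsolution lam l x) \<le> u x"
    using assms(1) sup_subsolution_is_solution unfolding is_perron_solution_def by blast
  moreover have "v x \<le> sup_subsolution lam l x"
    using assms(2) by (rule subsolution_le_sup_subsolution)
  ultimately show ?thesis
    by (meson ereal_less_eq(3) order_trans)
qed

end

lemma bounded_slope_problemI:
  fixes l :: "'a::metric_space \<Rightarrow> real"
  assumes "0 \<le> lam" "\<forall>x. 0 \<le> l x" "lsc l" "(INF x. l x) = 0"
    and "0 < D" "\<And>x y :: 'a. dist x y \<le> D"
  shows "bounded_slope_problem lam l D"
proof
  fix e :: real assume "0 < e"
  with assms(4) have "(INF x. l x) < e"
    by simp
  then show "\<exists>x. l x < e"
    using assms(2) by (subst (asm) cINF_less_iff) (auto intro: bdd_belowI2)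
qed (use assms in auto)

lemma shrink_defect_le:
  fixes s t D :: real
  assumes "0 \<le> s" "0 < t" "t \<le> 1" "0 < D"
  shows "s - (1 - t) * max (s - t * D) 0 \<le> t * D + t * s"
proof (cases "s \<le> t * D")
  case True
  moreover have "0 \<le> t * s"
    using assms by simp
  ultimately show ?thesis
    by simp
next
  case False
  then have "s - (1 - t) * max (s - t * D) 0 = t * s + (1 - t) * (t * D)"
    by (simp add: algebra_simps)
  also have "\<dots> \<le> t * s + 1 * (t * D)"
    using assms by (intro add_left_mono mult_right_mono) auto
  finally show ?thesis
    by simp
qed

lemma subsolution_shrink:
  fixes v :: "'a::metric_space \<Rightarrow> real"
  assumes v: "is_subsolution lam l' v" and lam: "0 \<le> lam"
    and l: "\<And>x. 0 \<le> l x" "\<And>x. 0 \<le> l' x" "\<And>x. l' x - t\<^sup>2 \<le> l x"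
    and D: "0 < D" "\<And>x y :: 'a. dist x y \<le> D" and t: "0 < t" "t \<le> 1"
  shows "is_subsolution lam l (\<lambda>x. (1 - t) * max (v x - t * D) 0)"
proof -
  define h where "h s = (1 - t) * max (s - t * D) 0" for s
  have h_nonneg: "0 \<le> h s" for s
    unfolding h_def using t by simp
  have "lsc (\<lambda>x. h (v x))"
  proof (rule lsc_mono_comp[of v h])
    show "lsc v"
      using v by (simp add: is_subsolution_def)
    show "mono h"
      unfolding h_def mono_def using t by (auto intro: mult_left_mono)
    show "isCont h s" for s
      unfolding h_def by (intro continuous_intros)
  qed
  moreover have "\<exists>x. h (v x) < e" if "0 < e" for e
  proof -
    obtain x where "v x < e"
      using v \<open>0 < e\<close> unfolding is_subsolution_def by blast
    moreover have "h (v x) \<le> max (v x - t * D) 0"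
      unfolding h_def using t mult_right_mono[of "1 - t" 1 "max (v x - t * D) 0"] by simp
    moreover have "max (v x - t * D) 0 \<le> v x"
      using v t D unfolding is_subsolution_def by simp
    ultimately have "h (v x) < e"
      by linarith
    then show ?thesis
      by blast
  qed
  moreover have "h (v x) - h (v y) \<le> (l x - lam * h (v x)) * dist x y" for x y
  proof (cases "v x \<le> t * D")
    case True
    then have "h (v x) = 0"
      by (simp add: h_def)
    moreover have "0 \<le> l x * dist x y"
      using l(1)[of x] by simp
    ultimately show ?thesis
      using h_nonneg[of "v y"] by simp
  next
    case False
    txt \<open>Where the truncation is inactive, \<open>v \<le> l' D\<close> forces \<open>t < l' x\<close>,
      hence \<open>(1 - t) l' x \<le> l' x - t\<^sup>2 \<le> l x\<close>.\<close>
    have "t * D < l' x * D"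
      using False subsolution_le[OF v lam l(2) D(2), of x] by simp
    then have "t * t < t * l' x"
      using D t by simp
    then have l_x: "(1 - t) * l' x \<le> l x"
      using l(3)[of x] by (simp add: power2_eq_square algebra_simps)
    have hx: "h (v x) = (1 - t) * (v x - t * D)"
      using False by (simp add: h_def)
    have "(1 - t) * (v y - t * D) \<le> h (v y)"
      unfolding h_def using t by (intro mult_left_mono) auto
    then have "h (v x) - h (v y) \<le> (1 - t) * (v x - v y)"
      using hx by (simp add: algebra_simps)
    also have "\<dots> \<le> (1 - t) * ((l' x - lam * v x) * dist x y)"
      using v t by (intro mult_left_mono) (auto simp: is_subsolution_def)
    also have "\<dots> = ((1 - t) * l' x - lam * h (v x) - lam * (1 - t) * t * D) * dist x y"
      unfolding hx by (simp add: algebra_simps)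
    also have "\<dots> \<le> (l x - lam * h (v x)) * dist x y"
    proof (rule mult_right_mono)
      have "0 \<le> lam * (1 - t) * t * D"
        using lam t D by simp
      then show "(1 - t) * l' x - lam * h (v x) - lam * (1 - t) * t * D \<le> l x - lam * h (v x)"
        using l_x by linarith
    qed simp
    finally show ?thesis .
  qed
  ultimately have "is_subsolution lam l (\<lambda>x. h (v x))"
    using h_nonneg unfolding is_subsolution_def by blast
  then show ?thesis
    by (simp add: h_def)
qed

lemma (in bounded_slope_problem) subsolution_minus_perron_solution_le:
  assumes u: "is_perron_solution lam l u" and v: "is_subsolution lam l' v"
    and l': "\<And>x. 0 \<le> l' x" "\<And>x. l' x - t\<^sup>2 \<le> l x" and t: "0 < t" "t \<le> 1"
  shows "v x - real_of_ereal (u x) \<le> t * D * (1 + l' x)"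
proof -
  have "is_subsolution lam l (\<lambda>x. (1 - t) * max (v x - t * D) 0)"
    using v lam_nonneg l_nonneg l' D_pos dist_le_D t by (rule subsolution_shrink)
  then have "ereal ((1 - t) * max (v x - t * D) 0) \<le> u x"
    using u by (intro perron_solution_ge_subsolution)
  then have "(1 - t) * max (v x - t * D) 0 \<le> real_of_ereal (u x)"
    using u solution_finite[OF lam_nonneg, of l u x] unfolding is_perron_solution_def
    by (metis ereal_less_eq(3))
  moreover have "v x - (1 - t) * max (v x - t * D) 0 \<le> t * D + t * v x"
    using v t D_pos by (intro shrink_defect_le) (auto simp: is_subsolution_def)
  moreover have "t * v x \<le> t * (l' x * D)"
    using subsolution_le[OF v lam_nonneg l'(1) dist_le_D] t by simp
  moreover have "t * D * (1 + l' x) = t * D + t * (l' x * D)"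
    by (simp add: algebra_simps)
  ultimately show ?thesis
    by linarith
qed

lemma perron_solutions_close:
  assumes P: "bounded_slope_problem lam l D" and P': "bounded_slope_problem lam l' D"
    and u: "is_perron_solution lam l u" and u': "is_perron_solution lam l' u'"
    and close: "\<And>x. \<bar>l' x - l x\<bar> \<le> t\<^sup>2" and t: "0 < t" "t \<le> 1"
    and M: "\<And>x. l x \<le> M"
  shows "\<bar>u' x - u x\<bar> \<le> ereal (t * D * (M + 2))"
proof -
  interpret P: bounded_slope_problem lam l D by (rule P)
  interpret P': bounded_slope_problem lam l' D by (rule P')
  have sol: "is_solution lam l u" "is_solution lam l' u'"
    using u u' unfolding is_perron_solution_def by blast+
  have below: "l x - t\<^sup>2 \<le> l' x" "l' x - t\<^sup>2 \<le> l x" for x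
    using close[of x] by (auto simp: abs_le_iff)
  define U U' where "U = real_of_ereal (u x)" and "U' = real_of_ereal (u' x)"
  have "u x = ereal U" "u' x = ereal U'"
    unfolding U_def U'_def using solution_finite[OF P.lam_nonneg] sol by blast+
  moreover have "U - U' \<le> t * D * (1 + l x)"
    unfolding U_def U'_def
    using solution_imp_subsolution[OF P.lam_nonneg sol(1)] P.l_nonneg below(1) t
    by (rule P'.subsolution_minus_perron_solution_le[OF u'])
  moreover have "U' - U \<le> t * D * (1 + l' x)"
    unfolding U_def U'_def
    using solution_imp_subsolution[OF P.lam_nonneg sol(2)] P'.l_nonneg below(2) t
    by (rule P.subsolution_minus_perron_solution_le[OF u])
  moreover have "t * D * (1 + l x) \<le> t * D * (M + 2)" "t * D * (1 + l' x) \<le> t * D * (M + 2)"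
  proof -
    have "t\<^sup>2 \<le> 1"
      using t by (simp add: power_le_one)
    then have "1 + l x \<le> M + 2" "1 + l' x \<le> M + 2"
      using M[of x] below(2)[of x] by auto
    then show "t * D * (1 + l x) \<le> t * D * (M + 2)" "t * D * (1 + l' x) \<le> t * D * (M + 2)"
      using t P.D_pos by (simp_all add: mult_left_mono)
  qed
  ultimately show ?thesis
    by (simp add: abs_le_iff)
qed

lemma perron_solution_continuous_dependence:
  assumes P: "bounded_slope_problem lam l D" and u: "is_perron_solution lam l u"
    and M: "\<And>x. l x \<le> M" and "0 < e"
  obtains \<delta> where "0 < \<delta>"
    "\<And>l' u' x. bounded_slope_problem lam l' D \<Longrightarrow> is_perron_solution lam l' u' \<Longrightarrow>
      (\<And>y. \<bar>l' y - l y\<bar> \<le> \<delta>) \<Longrightarrow> \<bar>u' x - u x\<bar> < ereal e"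
proof -
  interpret P: bounded_slope_problem lam l D by (rule P)
  define C where "C = D * (M + 2)"
  have "0 \<le> M"
    using M[of undefined] P.l_nonneg by (meson order_trans)
  then have C: "0 < C"
    unfolding C_def using P.D_pos by simp
  define t where "t = min 1 (e / (2 * C))"
  have t: "0 < t" "t \<le> 1"
    unfolding t_def using \<open>0 < e\<close> C by simp_all
  have "t * C \<le> e / (2 * C) * C"
    unfolding t_def using C by (intro mult_right_mono) auto
  also have "\<dots> < e"
    using C \<open>0 < e\<close> by simp
  finally have "ereal (t * D * (M + 2)) < ereal e"
    unfolding C_def by (simp add: mult.assoc)
  show ?thesis
  proof (rule that[of "t\<^sup>2"])
    show "0 < t\<^sup>2"
      using t by simp
    fix l' u' x
    assume "bounded_slope_problem lam l' D" "is_perron_solution lam l' u'"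
      "\<And>y. \<bar>l' y - l y\<bar> \<le> t\<^sup>2"
    then have "\<bar>u' x - u x\<bar> \<le> ereal (t * D * (M + 2))"
      by (rule perron_solutions_close[OF P _ u _ _ t M])
    also have "\<dots> < ereal e"
      by fact
    finally show "\<bar>u' x - u x\<bar> < ereal e" .
  qed
qed

lemma bounded_UNIV_dist_le:
  assumes "bounded (UNIV :: 'a::metric_space set)"
  obtains D where "0 < D" "\<And>x y :: 'a. dist x y \<le> D"
proof -
  obtain D0 where "\<And>x y :: 'a. dist x y \<le> D0"
    using assms unfolding bounded_two_points by blast
  then show thesis
    by (intro that[of "max D0 1"]) (auto intro: max.coboundedI1)
qed

theorem theorem5p4:
  fixes lam :: real
    and l :: "'a::metric_space \<Rightarrow> real"
    and ls :: "nat \<Rightarrow> 'a \<Rightarrow> real"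
    and u :: "'a \<Rightarrow> ereal"
    and us :: "nat \<Rightarrow> 'a \<Rightarrow> ereal"
  assumes X_bounded: "bounded (UNIV :: 'a set)"
    and lam_nonneg: "0 \<le> lam"
    and l_nonneg: "\<forall>x. 0 \<le> l x"
    and ls_nonneg: "\<forall>n x. 0 \<le> ls n x"
    and l_lsc: "lsc l"
    and ls_lsc: "\<forall>n. lsc (ls n)"
    and l_inf: "(INF x. l x) = 0"
    and ls_inf: "\<forall>n. (INF x. ls n x) = 0"
    and l_bounded: "bdd_above (range l)"
    and u_perron: "is_perron_solution lam l u"
    and us_perron: "\<forall>n. is_perron_solution lam (ls n) (us n)"
    and ls_unif: "uniform_limit UNIV ls l sequentially"
  shows "uniformly_conv_ereal us u"
  unfolding uniformly_conv_ereal_def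
proof (intro allI impI)
  fix e :: real assume "0 < e"
  obtain D where D: "0 < D" "\<And>x y :: 'a. dist x y \<le> D"
    using bounded_UNIV_dist_le[OF X_bounded] by blast
  obtain M where M: "\<And>x. l x \<le> M"
    using l_bounded by (auto simp: bdd_above_def)
  have P: "bounded_slope_problem lam l D"
    using lam_nonneg l_nonneg l_lsc l_inf D by (rule bounded_slope_problemI)
  have Pn: "bounded_slope_problem lam (ls n) D" for n
    using lam_nonneg ls_nonneg ls_lsc ls_inf D by (intro bounded_slope_problemI) auto
  obtain \<delta> where "0 < \<delta>" and close:
    "\<And>l' u' x. bounded_slope_problem lam l' D \<Longrightarrow> is_perron_solution lam l' u' \<Longrightarrow>
      (\<And>y. \<bar>l' y - l y\<bar> \<le> \<delta>) \<Longrightarrow> \<bar>u' x - u x\<bar> < ereal e"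
    using perron_solution_continuous_dependence[OF P u_perron M \<open>0 < e\<close>] by blast
  have "\<forall>\<^sub>F n in sequentially. \<forall>x. \<bar>ls n x - l x\<bar> < \<delta>"
    using ls_unif \<open>0 < \<delta>\<close> unfolding uniform_limit_iff dist_real_def by simp
  then show "\<forall>\<^sub>F n in sequentially. \<forall>x. \<bar>us n x - u x\<bar> < ereal e"
  proof (rule eventually_mono)
    fix n assume "\<forall>x. \<bar>ls n x - l x\<bar> < \<delta>"
    then have "\<bar>ls n y - l y\<bar> \<le> \<delta>" for y
      by (simp add: less_imp_le)
    then show "\<forall>x. \<bar>us n x - u x\<bar> < ereal e"
      using close[OF Pn us_perron[rule_format]] by blast
  qed
qed

end
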